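(* Let $H=([n],E)$ be a hypergraph and $F\ne F'$ two edges. If $F\cap F'=\emptyset$ then $Q_F\cap Q_{F'}$ is homeomorphic to a sphere of dimension $n-\#F-\#F'$; if $F\cap F'\ne\emptyset$ then $Q_F\cap Q_{F'}$ is homeomorphic to a sphere of dimension $n-\#(F\cup F')-1$. In particular, $Q_F\cap Q_{F'}$ has no nonempty face if and only if $F\cup F'=[n]$ and $F\cap F'\neq\emptyset$.
   Context: A hypergraph $H=([n],E)$ has edges that are nonempty subsets of $[n]$; standing assumptions: every vertex in some edge, no edge of size 1, no edge properly contained in another. The coloring complex $\Delta_H$ has as faces the ordered set partitions $B_1|\cdots|B_r$ of $[n]$ into nonempty blocks (of dimension $r-2$) with at least one block containing an edge; a face is contained in another if it is obtained from it by repeatedly merging adjacent blocks. For $F\in E$, the edge sphere $Q_F$ is the subcomplex of faces having a block containing $F$. A sphere of dimension $-1$ means the empty space (only the empty face). *)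

theory Defs
  imports "HOL-Analysis.Analysis"
begin

definition hypergraph :: "nat \<Rightarrow> nat set set \<Rightarrow> bool" where
  "hypergraph n E \<longleftrightarrow>
     (\<forall>e\<in>E. e \<noteq> {} \<and> e \<subseteq> {1..n}) \<and>
     \<Union>E = {1..n} \<and>
     (\<forall>e\<in>E. card e \<noteq> 1) \<and>
     (\<forall>e\<in>E. \<forall>e'\<in>E. \<not> (e \<subset> e'))"

definition ordered_set_partition :: "nat \<Rightarrow> nat set list \<Rightarrow> bool" where
  "ordered_set_partition n bs \<longleftrightarrow>
     (\<forall>B\<in>set bs. B \<noteq> {}) \<and>
     (\<forall>i<length bs. \<forall>j<length bs. i \<noteq> j \<longrightarrow> bs ! i \<inter> bs ! j = {}) \<and>
     \<Union>(set bs) = {1..n}"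

definition coloring_complex :: "nat \<Rightarrow> nat set set \<Rightarrow> nat set list set" where
  "coloring_complex n E =
     {bs. ordered_set_partition n bs \<and> (\<exists>B\<in>set bs. \<exists>e\<in>E. e \<subseteq> B)}"

definition edge_sphere :: "nat \<Rightarrow> nat set set \<Rightarrow> nat set \<Rightarrow> nat set list set" where
  "edge_sphere n E F = {bs \<in> coloring_complex n E. \<exists>B\<in>set bs. F \<subseteq> B}"

text \<open>Geometric realization: the face B_1|...|B_r is realized as the relatively open
  spherical cell of the braid arrangement (Coxeter complex of type A_{n-1}):
  unit vectors x in the hyperplane sum x_i = 0 of R^[n] (coordinates outside [n] are 0)
  that are constant on each block and strictly increasing from block to block.
  This cell has dimension r-2; the one-block partition (the empty face) has empty cell.\<close>
definition face_cell :: "nat \<Rightarrow> nat set list \<Rightarrow> (nat \<Rightarrow> real) set" where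
  "face_cell n bs =
     {x. (\<forall>i. i \<notin> {1..n} \<longrightarrow> x i = 0) \<and>
         (\<Sum>i\<in>{1..n}. x i) = 0 \<and>
         (\<Sum>i\<in>{1..n}. x i ^ 2) = 1 \<and>
         (\<forall>k<length bs. \<forall>i\<in>bs ! k. \<forall>j\<in>bs ! k. x i = x j) \<and>
         (\<forall>k<length bs. \<forall>l<length bs. k < l \<longrightarrow>
             (\<forall>i\<in>bs ! k. \<forall>j\<in>bs ! l. x i < x j))}"

definition realization :: "nat \<Rightarrow> nat set list set \<Rightarrow> (nat \<Rightarrow> real) set" where
  "realization n K = (\<Union>bs\<in>K. face_cell n bs)"

definition is_sphere_of_dim :: "(nat \<Rightarrow> real) set \<Rightarrow> int \<Rightarrow> bool" where
  "is_sphere_of_dim S d \<longleftrightarrow>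
     (d = -1 \<and> S = {}) \<or>
     (d \<ge> 0 \<and> subtopology (powertop_real UNIV) S homeomorphic_space nsphere (nat d))"

end

theory Submission imports Defs begin

(* A point of the braid sphere lies in the cell of exactly one ordered set
   partition, namely the partition into its level sets listed by increasing value.  Hence
   the realization of Q_F \<inter> Q_F' is the set of unit vectors x of the hyperplane
   sum x_i = 0 in R^[n] that are constant on F and on F' (lemma
   realization_edge_spheres_inter).  This set is the unit sphere of a linear subspace:
   x is determined by its values on [n] - F - F' together with its value on F' (if F and
   F' are disjoint; the value on F is then forced by the zero sum), resp. by its values
   on [n] - (F \<union> F') (if F and F' meet, so that x is constant on F \<union> F').
   The final claim about faces is purely combinatorial: a face of Q_F \<inter> Q_F' with two
   or more blocks exists unless F \<union> F' = [n] and F, F' meet in a common block. *)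

section \<open>Unit spheres of cones\<close>

definition unit_part :: "nat set \<Rightarrow> (nat \<Rightarrow> real) set \<Rightarrow> (nat \<Rightarrow> real) set" where
  "unit_part I S = {x \<in> S. (\<Sum>i\<in>I. x i ^ 2) = 1}"

definition normalize :: "nat set \<Rightarrow> (nat \<Rightarrow> real) \<Rightarrow> (nat \<Rightarrow> real)" where
  "normalize J y = (\<lambda>i. y i / sqrt (\<Sum>j\<in>J. y j ^ 2))"

lemma normalize_unit:
  assumes "(\<Sum>j\<in>J. y j ^ 2) \<noteq> 0"
  shows "(\<Sum>i\<in>J. normalize J y i ^ 2) = 1"
proof -
  have "(\<Sum>i\<in>J. normalize J y i ^ 2) = (\<Sum>j\<in>J. y j ^ 2) / (sqrt (\<Sum>j\<in>J. y j ^ 2))^2"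
    by (simp add: normalize_def power_divide sum_divide_distrib)
  also have "(sqrt (\<Sum>j\<in>J. y j ^ 2))^2 = (\<Sum>j\<in>J. y j ^ 2)" by (simp add: sum_nonneg)
  finally show ?thesis using assms by simp
qed

lemma normalize_is_scaling:
  assumes "(\<Sum>j\<in>J. y j ^ 2) \<noteq> 0"
  shows "\<exists>c > 0. normalize J y = (\<lambda>i. c * y i)"
proof -
  have "sqrt (\<Sum>j\<in>J. y j ^ 2) > 0" using assms sum_nonneg[of J "\<lambda>j. y j ^ 2"] by simp
  thus ?thesis by (intro exI[of _ "1 / sqrt (\<Sum>j\<in>J. y j ^ 2)"]) (simp add: normalize_def)
qed

lemma normalize_scale:
  assumes "c > 0"
  shows "normalize J (\<lambda>i. c * y i) = normalize J y"
proof -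
  have "sqrt (\<Sum>j\<in>J. (c * y j) ^ 2) = c * sqrt (\<Sum>j\<in>J. y j ^ 2)"
    using assms by (simp add: power_mult_distrib sum_distrib_left[symmetric] real_sqrt_mult)
  thus ?thesis using assms by (simp add: normalize_def fun_eq_iff)
qed

lemma normalize_unit_id: "(\<Sum>j\<in>J. y j ^ 2) = 1 \<Longrightarrow> normalize J y = y"
  by (simp add: normalize_def)

lemma continuous_map_coordinate:
  "continuous_map (powertop_real UNIV) euclideanreal (\<lambda>x. x k)"
  using continuous_map_product_projection[of k UNIV "\<lambda>_. euclideanreal"] by simp

lemma continuous_map_normalize:
  assumes "finite J"
    and h: "\<And>i. continuous_map (powertop_real UNIV) euclideanreal (\<lambda>x. h x i)"
    and nonzero: "\<And>x. x \<in> S \<Longrightarrow> (\<Sum>j\<in>J. h x j ^ 2) \<noteq> 0"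
  shows "continuous_map (subtopology (powertop_real UNIV) S) (powertop_real UNIV)
           (\<lambda>x. normalize J (h x))"
  unfolding continuous_map_componentwise_UNIV normalize_def
  using nonzero
  by (intro allI continuous_intros continuous_map_from_subtopology h assms(1))
    (auto simp: sum_nonneg)

lemma homogeneous_zero:
  fixes h :: "(nat \<Rightarrow> real) \<Rightarrow> (nat \<Rightarrow> real)"
  assumes "\<And>x c. c > 0 \<Longrightarrow> h (\<lambda>i. c * x i) = (\<lambda>i. c * h x i)"
  shows "h (\<lambda>i. 0) = (\<lambda>i. 0)"
proof -
  have "h (\<lambda>i. 2 * 0) = (\<lambda>i. 2 * h (\<lambda>i. 0) i)" using assms[of 2 "\<lambda>i. 0"] by simp
  thus ?thesis by (simp add: fun_eq_iff)
qed

lemma sum_squares_eq_0_imp_zero: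
  fixes y :: "nat \<Rightarrow> real"
  assumes "finite J" "(\<Sum>j\<in>J. y j ^ 2) = 0" "\<And>i. i \<notin> J \<Longrightarrow> y i = 0"
  shows "y = (\<lambda>i. 0)"
proof
  fix i
  show "y i = 0"
  proof (cases "i \<in> J")
    case True
    thus ?thesis using assms(1,2) sum_nonneg_eq_0_iff[of J "\<lambda>j. y j ^ 2"] by simp
  qed (use assms(3) in blast)
qed

lemma cone_sphere_homeomorphic:
  fixes f g :: "(nat \<Rightarrow> real) \<Rightarrow> (nat \<Rightarrow> real)" and U :: "(nat \<Rightarrow> real) set"
    and I :: "nat set" and d :: nat
  assumes fin: "finite I"
    and cf: "\<And>i. continuous_map (powertop_real UNIV) euclideanreal (\<lambda>x. f x i)"
    and cg: "\<And>i. continuous_map (powertop_real UNIV) euclideanreal (\<lambda>x. g x i)"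
    and fh: "\<And>x c. c > 0 \<Longrightarrow> f (\<lambda>i. c * x i) = (\<lambda>i. c * f x i)"
    and gh: "\<And>x c. c > 0 \<Longrightarrow> g (\<lambda>i. c * x i) = (\<lambda>i. c * g x i)"
    and Uc: "\<And>x c. x \<in> U \<Longrightarrow> c > 0 \<Longrightarrow> (\<lambda>i. c * x i) \<in> U"
    and Usupp: "\<And>x i. x \<in> U \<Longrightarrow> i \<notin> I \<Longrightarrow> x i = 0"
    and fW: "\<And>x i. x \<in> U \<Longrightarrow> i > d \<Longrightarrow> f x i = 0"
    and gf: "\<And>x. x \<in> U \<Longrightarrow> g (f x) = x"
    and gU: "\<And>y. \<forall>i>d. y i = 0 \<Longrightarrow> g y \<in> U"
    and fg: "\<And>y. \<forall>i>d. y i = 0 \<Longrightarrow> f (g y) = y"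
  shows "subtopology (powertop_real UNIV) (unit_part I U) homeomorphic_space nsphere d"
proof -
  define S where "S = unit_part I U"
  define T where "T = {y::nat\<Rightarrow>real. (\<Sum>i\<le>d. y i ^ 2) = 1 \<and> (\<forall>i>d. y i = 0)}"
  define FF where "FF x = normalize {..d} (f x)" for x
  define GG where "GG y = normalize I (g y)" for y
  have f_nonzero: "(\<Sum>i\<le>d. f x i ^ 2) \<noteq> 0" if x: "x \<in> S" for x
  proof
    assume "(\<Sum>i\<le>d. f x i ^ 2) = 0"
    moreover have "f x i = 0" if "i \<notin> {..d}" for i
      using x fW that by (auto simp: S_def unit_part_def)
    ultimately have "f x = (\<lambda>i. 0)" by (intro sum_squares_eq_0_imp_zero) auto
    thus False using gf[of x] homogeneous_zero[of g] gh x by (auto simp: S_def unit_part_def)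
  qed
  have g_nonzero: "(\<Sum>i\<in>I. g y i ^ 2) \<noteq> 0" if y: "y \<in> T" for y
  proof
    assume "(\<Sum>i\<in>I. g y i ^ 2) = 0"
    hence "g y = (\<lambda>i. 0)" using y fin Usupp gU by (intro sum_squares_eq_0_imp_zero) (auto simp: T_def)
    thus False using fg[of y] homogeneous_zero[of f] fh y by (auto simp: T_def)
  qed
  have FF_T: "FF x \<in> T" if "x \<in> S" for x
    using normalize_unit[OF f_nonzero[OF that]] fW that
    by (auto simp: T_def FF_def S_def unit_part_def normalize_def)
  have GG_S: "GG y \<in> S" if y: "y \<in> T" for y
  proof -
    obtain c where "c > 0" "GG y = (\<lambda>i. c * g y i)"
      using normalize_is_scaling[OF g_nonzero[OF y]] by (auto simp: GG_def)
    hence "GG y \<in> U" using Uc gU y by (auto simp: T_def)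
    thus ?thesis using normalize_unit[OF g_nonzero[OF y]] by (simp add: S_def unit_part_def GG_def)
  qed
  have GG_FF: "GG (FF x) = x" if x: "x \<in> S" for x
  proof -
    obtain c where c: "c > 0" "FF x = (\<lambda>i. c * f x i)"
      using normalize_is_scaling[OF f_nonzero[OF x]] by (auto simp: FF_def)
    have xU: "x \<in> U" using x by (simp add: S_def unit_part_def)
    have "g (FF x) = g (f (\<lambda>i. c * x i))" using c fh[OF c(1)] by simp
    also have "\<dots> = (\<lambda>i. c * x i)" using gf Uc[OF xU c(1)] by blast
    finally have "g (FF x) = (\<lambda>i. c * x i)" .
    thus ?thesis using normalize_scale[OF c(1)] normalize_unit_id x by (simp add: GG_def S_def unit_part_def)
  qed
  have FF_GG: "FF (GG y) = y" if y: "y \<in> T" for y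
  proof -
    obtain c where c: "c > 0" "GG y = (\<lambda>i. c * g y i)"
      using normalize_is_scaling[OF g_nonzero[OF y]] by (auto simp: GG_def)
    have "f (GG y) = f (g (\<lambda>i. c * y i))" using c gh[OF c(1)] by simp
    also have "\<dots> = (\<lambda>i. c * y i)" using fg y by (simp add: T_def)
    finally have "f (GG y) = (\<lambda>i. c * y i)" .
    thus ?thesis using normalize_scale[OF c(1)] normalize_unit_id y by (simp add: FF_def T_def)
  qed
  have "continuous_map (subtopology (powertop_real UNIV) S) (nsphere d) FF"
    unfolding nsphere T_def[symmetric] FF_def
    using continuous_map_normalize[of "{..d}" f S] cf f_nonzero FF_T
    by (intro continuous_map_into_subtopology) (auto simp: FF_def)
  moreover have "continuous_map (nsphere d) (subtopology (powertop_real UNIV) S) GG"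
    unfolding nsphere T_def[symmetric] GG_def
    using continuous_map_normalize[of I g T] fin cg g_nonzero GG_S
    by (intro continuous_map_into_subtopology) (auto simp: GG_def)
  ultimately have "homeomorphic_maps (subtopology (powertop_real UNIV) S) (nsphere d) FF GG"
    unfolding homeomorphic_maps_def using GG_FF FF_GG by (auto simp: nsphere T_def[symmetric])
  thus ?thesis unfolding S_def homeomorphic_space_def by blast
qed

section \<open>Zero-sum cones with prescribed equal coordinates\<close>

text \<open>The block
  \<open>G\<close> absorbs the zero-sum condition, so such a vector is freely determined by its values
  on a set \<open>J\<close> of representatives of the fibres of \<open>r\<close>.\<close>
definition zero_sum_cone :: "nat set \<Rightarrow> nat set \<Rightarrow> (nat \<Rightarrow> nat) \<Rightarrow> (nat \<Rightarrow> real) set" where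
  "zero_sum_cone I G r =
     {x. (\<forall>i. i \<notin> I \<longrightarrow> x i = 0) \<and> sum x I = 0 \<and> x constant_on G \<and> (\<forall>i\<in>I - G. x i = x (r i))}"

lemma zero_sum_cone_block_value:
  assumes finI: "finite I" and GI: "G \<subseteq> I" and x: "x \<in> zero_sum_cone I G r" and i: "i \<in> G"
  shows "x i = - sum x (I - G) / real (card G)"
proof -
  have "\<forall>j\<in>G. x j = x i" using x i by (auto simp: zero_sum_cone_def constant_on_def)
  hence "sum x G = real (card G) * x i" by simp
  moreover have "sum x I = sum x (I - G) + sum x G" using sum.subset_diff[OF GI finI] by simp
  moreover have "sum x I = 0" using x by (simp add: zero_sum_cone_def)
  moreover have "real (card G) > 0" using i GI finI by (auto simp: card_gt_0_iff finite_subset)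
  ultimately show ?thesis by (simp add: field_simps)
qed

lemma finite_enumeration:
  assumes "finite J" "card J = m"
  obtains e e' :: "nat \<Rightarrow> nat"
  where "\<And>k. k < m \<Longrightarrow> e k \<in> J \<and> e' (e k) = k" "\<And>j. j \<in> J \<Longrightarrow> e' j < m \<and> e (e' j) = j"
proof -
  obtain e where e: "bij_betw e {0..<m} J" using ex_bij_betw_nat_finite[OF assms(1)] assms(2) by blast
  show thesis
  proof
    show "e k \<in> J \<and> inv_into {0..<m} e (e k) = k" if "k < m" for k
      using e that by (auto simp: bij_betw_def)
    show "inv_into {0..<m} e j < m \<and> e (inv_into {0..<m} e j) = j" if "j \<in> J" for j
      using e that bij_betw_inv_into[OF e] by (auto simp: bij_betw_def bij_betw_inv_into_right)
  qed
qed

text \<open>If \<open>r\<close> retracts \<open>I - G\<close> onto a set \<open>J\<close> of \<open>d + 1\<close> representatives, the unit sphere of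
  the zero-sum cone is a \<open>d\<close>-sphere: restriction to \<open>J\<close> (enumerated by \<open>e\<close>) is a linear
  isomorphism onto \<open>R^{0..d}\<close>, inverted by spreading the values along the fibres of \<open>r\<close>
  and putting minus the average of their sum on \<open>G\<close>.\<close>
lemma zero_sum_cone_sphere:
  fixes I G J :: "nat set" and r :: "nat \<Rightarrow> nat" and d :: nat
  assumes finI: "finite I" and GI: "G \<subseteq> I" and Gne: "G \<noteq> {}"
    and JI: "J \<subseteq> I - G" and rJ: "\<And>i. i \<in> I - G \<Longrightarrow> r i \<in> J"
    and rfix: "\<And>j. j \<in> J \<Longrightarrow> r j = j" and cardJ: "card J = Suc d"
  shows "subtopology (powertop_real UNIV) (unit_part I (zero_sum_cone I G r))
           homeomorphic_space nsphere d"
proof -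
  obtain e e' where e: "\<And>k. k < Suc d \<Longrightarrow> e k \<in> J \<and> e' (e k) = k"
    and e': "\<And>j. j \<in> J \<Longrightarrow> e' j < Suc d \<and> e (e' j) = j"
    using finite_enumeration[OF finite_subset[OF JI] cardJ] finI by blast
  have cG: "real (card G) > 0" using Gne GI finI by (simp add: card_gt_0_iff finite_subset)
  define val where "val y i = y (e' (r i))" for y :: "nat \<Rightarrow> real" and i
  define f where "f x = (\<lambda>k. if k < Suc d then x (e k) else 0)" for x :: "nat \<Rightarrow> real"
  define g where "g y = (\<lambda>i. if i \<in> I - G then val y i
      else if i \<in> G then - (\<Sum>j\<in>I - G. val y j) / real (card G) else 0)" for y
  show ?thesis
  proof (rule cone_sphere_homeomorphic[where f = f and g = g])
    show "finite I" by fact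
    show "continuous_map (powertop_real UNIV) euclideanreal (\<lambda>x. f x k)" for k
      by (simp add: f_def continuous_map_coordinate)
    show "continuous_map (powertop_real UNIV) euclideanreal (\<lambda>y. g y i)" for i
    proof -
      have "continuous_map (powertop_real UNIV) euclideanreal
              (\<lambda>y. - (\<Sum>j\<in>I - G. val y j) / real (card G))"
        unfolding val_def
        by (intro continuous_map_real_divide continuous_map_minus continuous_map_sum
            continuous_map_coordinate continuous_map_canonical_const) (use cG finI in auto)
      thus ?thesis
        by (cases "i \<in> I - G"; cases "i \<in> G") (simp_all add: g_def val_def continuous_map_coordinate)
    qed
    show "f (\<lambda>i. c * x i) = (\<lambda>i. c * f x i)" for x c by (auto simp: f_def)
    show "g (\<lambda>i. c * y i) = (\<lambda>i. c * g y i)" for y c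
      by (auto simp: g_def val_def sum_distrib_left)
    show "(\<lambda>i. c * x i) \<in> zero_sum_cone I G r" if "x \<in> zero_sum_cone I G r" for x c
      using that by (auto simp: zero_sum_cone_def constant_on_def sum_distrib_left[symmetric])
    show "x i = 0" if "x \<in> zero_sum_cone I G r" "i \<notin> I" for x i
      using that by (auto simp: zero_sum_cone_def)
    show "f x k = 0" if "k > d" for x k using that by (auto simp: f_def)
    show "g (f x) = x" if x: "x \<in> zero_sum_cone I G r" for x
    proof
      fix i
      have fib: "val (f x) j = x j" if "j \<in> I - G" for j
        using x that rJ[OF that] e' by (simp add: val_def f_def zero_sum_cone_def)
      show "g (f x) i = x i"
        using fib zero_sum_cone_block_value[OF finI GI x, of i] x
        by (auto simp: g_def zero_sum_cone_def)
    qed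
    show "g y \<in> zero_sum_cone I G r" if "\<forall>k>d. y k = 0" for y
    proof -
      have "sum (g y) I = sum (g y) (I - G) + sum (g y) G" using sum.subset_diff[OF GI finI] by simp
      moreover have "sum (g y) G = - (\<Sum>j\<in>I - G. val y j)" using cG by (simp add: g_def)
      moreover have "sum (g y) (I - G) = (\<Sum>j\<in>I - G. val y j)" by (simp add: g_def)
      moreover have "val y (r i) = val y i" if "i \<in> I - G" for i
        using rfix[OF rJ[OF that]] by (simp add: val_def)
      ultimately show ?thesis using GI rJ JI by (auto simp: zero_sum_cone_def constant_on_def g_def)
    qed
    show "f (g y) = y" if "\<forall>k>d. y k = 0" for y
    proof
      fix k
      show "f (g y) k = y k" using that e JI rfix by (auto simp: f_def g_def val_def not_less)
    qed
  qed
qed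

definition pair_cone :: "nat set \<Rightarrow> nat set \<Rightarrow> nat set \<Rightarrow> (nat \<Rightarrow> real) set" where
  "pair_cone I F F' =
     {x. (\<forall>i. i \<notin> I \<longrightarrow> x i = 0) \<and> sum x I = 0 \<and> x constant_on F \<and> x constant_on F'}"

lemma constant_on_Un:
  assumes "f constant_on A" "f constant_on B" "A \<inter> B \<noteq> {}"
  shows "f constant_on (A \<union> B)"
proof -
  obtain a where "a \<in> A" "a \<in> B" using assms(3) by blast
  with assms(1,2) have "\<forall>x\<in>A \<union> B. f x = f a" unfolding constant_on_def by fastforce
  thus ?thesis unfolding constant_on_def by blast
qed

text \<open>Disjoint \<open>F\<close>, \<open>F'\<close>: the free coordinates are those outside \<open>F \<union> F'\<close> plus the common
  value on \<open>F'\<close> (represented by a point \<open>p \<in> F'\<close>); the value on \<open>F\<close> is forced.\<close>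
lemma disjoint_pair_cone_sphere:
  assumes finI: "finite I" and FI: "F \<subseteq> I" "F \<noteq> {}" and FI': "F' \<subseteq> I" "F' \<noteq> {}"
    and disj: "F \<inter> F' = {}"
  shows "subtopology (powertop_real UNIV) (unit_part I (pair_cone I F F'))
           homeomorphic_space nsphere (card (I - (F \<union> F')))"
proof -
  obtain p where p: "p \<in> F'" using FI' by blast
  define r where "r i = (if i \<in> F' then p else i)" for i
  have "pair_cone I F F' = zero_sum_cone I F r"
  proof -
    have "x constant_on F' \<longleftrightarrow> (\<forall>i\<in>I - F. x i = x (r i))" for x :: "nat \<Rightarrow> real"
      using p disj FI' by (auto simp: constant_on_def r_def)
    thus ?thesis by (simp add: pair_cone_def zero_sum_cone_def)
  qed
  moreover have "subtopology (powertop_real UNIV) (unit_part I (zero_sum_cone I F r))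
                   homeomorphic_space nsphere (card (I - (F \<union> F')))"
  proof (rule zero_sum_cone_sphere[OF finI FI])
    show "insert p (I - (F \<union> F')) \<subseteq> I - F" using p disj FI' by auto
    show "r i \<in> insert p (I - (F \<union> F'))" if "i \<in> I - F" for i using that by (auto simp: r_def)
    show "r j = j" if "j \<in> insert p (I - (F \<union> F'))" for j using that p by (auto simp: r_def)
    show "card (insert p (I - (F \<union> F'))) = Suc (card (I - (F \<union> F')))" using p finI by simp
  qed
  ultimately show ?thesis by simp
qed

lemma overlapping_pair_cone:
  assumes "F \<inter> F' \<noteq> {}"
  shows "pair_cone I F F' = zero_sum_cone I (F \<union> F') id"
  using assms constant_on_Un[of _ F F'] constant_on_subset[of _ "F \<union> F'"]
  by (auto simp: pair_cone_def zero_sum_cone_def)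

lemma overlapping_pair_cone_sphere:
  assumes finI: "finite I" and FI: "F \<subseteq> I" "F' \<subseteq> I" and meet: "F \<inter> F' \<noteq> {}"
    and proper: "F \<union> F' \<noteq> I"
  shows "subtopology (powertop_real UNIV) (unit_part I (pair_cone I F F'))
           homeomorphic_space nsphere (card (I - (F \<union> F')) - 1)"
proof -
  have "I - (F \<union> F') \<noteq> {}" using FI proper by blast
  hence "card (I - (F \<union> F')) = Suc (card (I - (F \<union> F')) - 1)"
    using finI by (simp add: card_gt_0_iff)
  thus ?thesis
    unfolding overlapping_pair_cone[OF meet]
    using zero_sum_cone_sphere[OF finI, of "F \<union> F'" "I - (F \<union> F')" id] FI meet by auto
qed

text \<open>If moreover \<open>F \<union> F' = I\<close>, a vector in the cone is constant on \<open>I\<close> with sum zero, hence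
  zero: the unit sphere is empty.\<close>
lemma covering_pair_cone_empty:
  assumes finI: "finite I" and meet: "F \<inter> F' \<noteq> {}" and cover: "F \<union> F' = I"
  shows "unit_part I (pair_cone I F F') = {}"
proof -
  have "x \<notin> pair_cone I F F'" if "(\<Sum>i\<in>I. x i ^ 2) = 1" for x
  proof
    assume x: "x \<in> pair_cone I F F'"
    hence "x constant_on I" using constant_on_Un[OF _ _ meet, of x] cover by (simp add: pair_cone_def)
    then obtain c where c: "\<forall>i\<in>I. x i = c" by (auto simp: constant_on_def)
    have "real (card I) * c = 0" using x c by (simp add: pair_cone_def)
    moreover have "card I > 0" using meet cover finI by (auto simp: card_gt_0_iff)
    ultimately have "c = 0" by simp
    thus False using c that by simp
  qed
  thus ?thesis by (auto simp: unit_part_def)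
qed

section \<open>The realization of the intersection of two edge spheres\<close>

definition level_partition :: "nat \<Rightarrow> (nat \<Rightarrow> real) \<Rightarrow> nat set list" where
  "level_partition n x = map (\<lambda>v. {i \<in> {1..n}. x i = v}) (sorted_list_of_set (x ` {1..n}))"

lemma level_partition_nth:
  assumes "k < length (level_partition n x)"
  shows "level_partition n x ! k = {i \<in> {1..n}. x i = sorted_list_of_set (x ` {1..n}) ! k}"
  using assms by (simp add: level_partition_def)

lemma ordered_set_partition_level_partition: "ordered_set_partition n (level_partition n x)"
  unfolding ordered_set_partition_def
proof (intro conjI ballI allI impI)
  fix B assume "B \<in> set (level_partition n x)"
  thus "B \<noteq> {}" by (auto simp: level_partition_def)
next
  fix k l assume kl: "k < length (level_partition n x)" "l < length (level_partition n x)" "k \<noteq> l"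
  hence "sorted_list_of_set (x ` {1..n}) ! k \<noteq> sorted_list_of_set (x ` {1..n}) ! l"
    by (simp add: level_partition_def nth_eq_iff_index_eq)
  thus "level_partition n x ! k \<inter> level_partition n x ! l = {}"
    using kl by (auto simp: level_partition_nth)
next
  show "\<Union> (set (level_partition n x)) = {1..n}" by (auto simp: level_partition_def)
qed

lemma level_partition_block:
  assumes "A \<subseteq> {1..n}" "A \<noteq> {}" "x constant_on A"
  shows "\<exists>B\<in>set (level_partition n x). A \<subseteq> B"
proof -
  obtain a where a: "a \<in> A" using assms(2) by blast
  have "\<forall>i\<in>A. x i = x a" using assms(3) a by (auto simp: constant_on_def)
  hence "A \<subseteq> {i \<in> {1..n}. x i = x a}" using assms(1) by auto
  moreover have "{i \<in> {1..n}. x i = x a} \<in> set (level_partition n x)"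
    using a assms(1) by (auto simp: level_partition_def)
  ultimately show ?thesis by blast
qed

lemma face_cell_level_partition:
  assumes "\<forall>i. i \<notin> {1..n} \<longrightarrow> x i = 0" "(\<Sum>i\<in>{1..n}. x i) = 0" "(\<Sum>i\<in>{1..n}. x i ^ 2) = 1"
  shows "x \<in> face_cell n (level_partition n x)"
  unfolding face_cell_def
proof (intro CollectI conjI allI impI ballI assms(2,3))
  show "x i = 0" if "i \<notin> {1..n}" for i using assms(1) that by blast
  show "x i = x j" if "k < length (level_partition n x)"
    "i \<in> level_partition n x ! k" "j \<in> level_partition n x ! k" for k i j
    using that by (simp add: level_partition_nth)
  show "x i < x j" if "k < length (level_partition n x)" "l < length (level_partition n x)" "k < l"
    "i \<in> level_partition n x ! k" "j \<in> level_partition n x ! l" for k l i j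
  proof -
    have "sorted_list_of_set (x ` {1..n}) ! k < sorted_list_of_set (x ` {1..n}) ! l"
      using sorted_wrt_nth_less[OF strict_sorted_list_of_set, of k l] that
      by (simp add: level_partition_def)
    thus ?thesis using that by (simp add: level_partition_nth)
  qed
qed

lemma face_cell_constant_on:
  assumes "x \<in> face_cell n bs" "B \<in> set bs" "A \<subseteq> B"
  shows "x constant_on A"
proof -
  obtain k where k: "k < length bs" "bs ! k = B" using assms(2) by (auto simp: in_set_conv_nth)
  have "\<forall>i\<in>B. \<forall>j\<in>B. x i = x j" using assms(1) k unfolding face_cell_def by blast
  thus ?thesis using assms(3) unfolding constant_on_def by (cases "A = {}") blast+
qed

lemma realization_edge_spheres_inter:
  assumes FE: "F \<in> E" and F: "F \<subseteq> {1..n}" "F \<noteq> {}" and F': "F' \<subseteq> {1..n}" "F' \<noteq> {}"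
  shows "realization n (edge_sphere n E F \<inter> edge_sphere n E F')
           = unit_part {1..n} (pair_cone {1..n} F F')"
proof
  show "realization n (edge_sphere n E F \<inter> edge_sphere n E F') \<subseteq> unit_part {1..n} (pair_cone {1..n} F F')"
  proof
    fix x assume "x \<in> realization n (edge_sphere n E F \<inter> edge_sphere n E F')"
    then obtain bs where bs: "bs \<in> edge_sphere n E F" "bs \<in> edge_sphere n E F'" "x \<in> face_cell n bs"
      unfolding realization_def by blast
    have "x constant_on F" "x constant_on F'"
      using bs face_cell_constant_on[OF bs(3)] unfolding edge_sphere_def by blast+
    with bs(3) show "x \<in> unit_part {1..n} (pair_cone {1..n} F F')"
      by (simp add: face_cell_def unit_part_def pair_cone_def)
  qed
  show "unit_part {1..n} (pair_cone {1..n} F F') \<subseteq> realization n (edge_sphere n E F \<inter> edge_sphere n E F')"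
  proof
    fix x assume x: "x \<in> unit_part {1..n} (pair_cone {1..n} F F')"
    let ?bs = "level_partition n x"
    have "x constant_on F" "x constant_on F'" using x by (auto simp: unit_part_def pair_cone_def)
    then obtain B B' where B: "B \<in> set ?bs" "F \<subseteq> B" and B': "B' \<in> set ?bs" "F' \<subseteq> B'"
      using level_partition_block[OF F] level_partition_block[OF F'] by blast
    have "?bs \<in> coloring_complex n E"
      using B FE ordered_set_partition_level_partition unfolding coloring_complex_def by blast
    hence "?bs \<in> edge_sphere n E F \<inter> edge_sphere n E F'" using B B' unfolding edge_sphere_def by blast
    moreover have "x \<in> face_cell n ?bs"
      using x by (intro face_cell_level_partition) (auto simp: unit_part_def pair_cone_def)
    ultimately show "x \<in> realization n (edge_sphere n E F \<inter> edge_sphere n E F')"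
      unfolding realization_def by blast
  qed
qed

section \<open>Faces of the intersection of two edge spheres\<close>

lemma ordered_set_partition_same_block:
  assumes "ordered_set_partition n bs" "B \<in> set bs" "B' \<in> set bs" "B \<inter> B' \<noteq> {}"
  shows "B = B'"
proof (rule ccontr)
  assume "B \<noteq> B'"
  obtain k l where "k < length bs" "bs ! k = B" "l < length bs" "bs ! l = B'"
    using assms(2,3) by (auto simp: in_set_conv_nth)
  with \<open>B \<noteq> B'\<close> assms(1,4) show False unfolding ordered_set_partition_def by blast
qed

lemma ordered_set_partition_full_block:
  assumes osp: "ordered_set_partition n bs" and B: "B \<in> set bs" "{1..n} \<subseteq> B"
  shows "length bs \<le> 1"
proof (rule ccontr)
  assume long: "\<not> length bs \<le> 1"
  obtain k where k: "k < length bs" "bs ! k = B" using B(1) by (auto simp: in_set_conv_nth)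
  define l where "l = (if k = 0 then 1 else 0 :: nat)"
  have kl: "k < length bs" "l < length bs" "k \<noteq> l" "bs ! k = B"
    using k long by (auto simp: l_def)
  have "bs ! l \<noteq> {}" "bs ! l \<subseteq> {1..n}" "bs ! l \<inter> bs ! k = {}"
    using osp kl unfolding ordered_set_partition_def by (auto dest: nth_mem)
  with B(2) kl(4) show False by blast
qed

lemma ordered_set_partition_two_blocks:
  assumes "A \<subseteq> {1..n}" "A \<noteq> {}" "A \<noteq> {1..n}"
  shows "ordered_set_partition n [A, {1..n} - A]"
  using assms unfolding ordered_set_partition_def
  by (auto simp: less_Suc_eq nth_Cons split: nat.splits)

text \<open>If \<open>F\<close> and \<open>F'\<close> meet and cover \<open>[n]\<close>, they lie in a common block containing \<open>[n]\<close>, so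
  \<open>Q_F \<inter> Q_F'\<close> has only the empty face.\<close>
lemma edge_spheres_inter_only_empty_face:
  assumes cover: "F \<union> F' = {1..n}" and meet: "F \<inter> F' \<noteq> {}"
    and bs: "bs \<in> edge_sphere n E F \<inter> edge_sphere n E F'"
  shows "length bs \<le> 1"
proof -
  obtain B B' where B: "B \<in> set bs" "F \<subseteq> B" and B': "B' \<in> set bs" "F' \<subseteq> B'"
    using bs unfolding edge_sphere_def by blast
  have osp: "ordered_set_partition n bs"
    using bs unfolding edge_sphere_def coloring_complex_def by blast
  have "B = B'" using ordered_set_partition_same_block[OF osp B(1) B'(1)] B(2) B'(2) meet by blast
  thus ?thesis using ordered_set_partition_full_block[OF osp B(1)] B(2) B'(2) cover by blast
qed

text \<open>Otherwise the two-block face \<open>A | [n] - A\<close> lies in \<open>Q_F \<inter> Q_F'\<close>, where \<open>A = F\<close> if the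
  edges are disjoint and \<open>A = F \<union> F'\<close> if they meet.\<close>
lemma edge_spheres_inter_proper_face:
  assumes FE: "F \<in> E" and F: "F \<subseteq> {1..n}" "F \<noteq> {}" and F': "F' \<subseteq> {1..n}" "F' \<noteq> {}"
    and not_trivial: "\<not> (F \<union> F' = {1..n} \<and> F \<inter> F' \<noteq> {})"
  shows "\<exists>bs \<in> edge_sphere n E F \<inter> edge_sphere n E F'. length bs = 2"
proof -
  define A where "A = (if F \<inter> F' = {} then F else F \<union> F')"
  have A: "A \<subseteq> {1..n}" "A \<noteq> {}" "A \<noteq> {1..n}" "F \<subseteq> A"
    using F F' not_trivial by (auto simp: A_def)
  have "F' \<subseteq> A \<or> F' \<subseteq> {1..n} - A" using F' by (auto simp: A_def)
  hence "[A, {1..n} - A] \<in> edge_sphere n E F \<inter> edge_sphere n E F'"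
    using ordered_set_partition_two_blocks[OF A(1-3)] A(4) FE
    unfolding edge_sphere_def coloring_complex_def by auto
  thus ?thesis by force
qed

lemma edge_spheres_inter_trivial_iff:
  assumes FE: "F \<in> E" and F: "F \<subseteq> {1..n}" "F \<noteq> {}" and F': "F' \<subseteq> {1..n}" "F' \<noteq> {}"
  shows "(\<forall>bs \<in> edge_sphere n E F \<inter> edge_sphere n E F'. length bs \<le> 1)
           \<longleftrightarrow> (F \<union> F' = {1..n} \<and> F \<inter> F' \<noteq> {})"
proof
  assume only_empty: "\<forall>bs \<in> edge_sphere n E F \<inter> edge_sphere n E F'. length bs \<le> 1"
  show "F \<union> F' = {1..n} \<and> F \<inter> F' \<noteq> {}"
  proof (rule ccontr)
    assume "\<not> (F \<union> F' = {1..n} \<and> F \<inter> F' \<noteq> {})"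
    then obtain bs where bs: "bs \<in> edge_sphere n E F \<inter> edge_sphere n E F'" "length bs = 2"
      using edge_spheres_inter_proper_face[OF FE F F'] by blast
    have "length bs \<le> 1" using only_empty bs(1) by blast
    with bs(2) show False by simp
  qed
qed (use edge_spheres_inter_only_empty_face in blast)

lemma card_complement_interval:
  assumes "A \<subseteq> {1..n}"
  shows "int (card ({1..n} - A)) = int n - int (card A)"
proof -
  have "card A \<le> n" using card_mono[OF _ assms] by simp
  thus ?thesis using assms by (simp add: card_Diff_subset finite_subset of_nat_diff)
qed

lemma is_sphere_of_dimI:
  assumes "subtopology (powertop_real UNIV) S homeomorphic_space nsphere d" "int d = k"
  shows "is_sphere_of_dim S k"
  using assms unfolding is_sphere_of_dim_def by auto

theorem mainTheorem12:
  fixes n :: nat and E :: "nat set set" and F F' :: "nat set"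
  assumes "hypergraph n E" and "F \<in> E" and "F' \<in> E" and "F \<noteq> F'"
  shows "(F \<inter> F' = {} \<longrightarrow>
            is_sphere_of_dim
              (realization n (edge_sphere n E F \<inter> edge_sphere n E F'))
              (int n - int (card F) - int (card F')))
       \<and> (F \<inter> F' \<noteq> {} \<longrightarrow>
            is_sphere_of_dim
              (realization n (edge_sphere n E F \<inter> edge_sphere n E F'))
              (int n - int (card (F \<union> F')) - 1))
       \<and> ((\<forall>bs \<in> edge_sphere n E F \<inter> edge_sphere n E F'. length bs \<le> 1)
            \<longleftrightarrow> (F \<union> F' = {1..n} \<and> F \<inter> F' \<noteq> {}))"
proof -
  have F: "F \<subseteq> {1..n}" "F \<noteq> {}" and F': "F' \<subseteq> {1..n}" "F' \<noteq> {}"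
    using assms(1-3) unfolding hypergraph_def by auto
  have finF: "finite F" "finite F'" using F(1) F'(1) finite_subset by auto
  note realization = realization_edge_spheres_inter[OF assms(2) F F']
  have disjoint: "is_sphere_of_dim (realization n (edge_sphere n E F \<inter> edge_sphere n E F'))
                    (int n - int (card F) - int (card F'))" if disj: "F \<inter> F' = {}"
  proof -
    have "int (card ({1..n} - (F \<union> F'))) = int n - int (card F) - int (card F')"
      using card_complement_interval[of "F \<union> F'" n] card_Un_disjoint[OF finF disj] F(1) F'(1)
      by simp
    thus ?thesis unfolding realization
      by (intro is_sphere_of_dimI[OF disjoint_pair_cone_sphere[OF _ F F' disj]]) simp_all
  qed
  have overlapping: "is_sphere_of_dim (realization n (edge_sphere n E F \<inter> edge_sphere n E F'))
                       (int n - int (card (F \<union> F')) - 1)" if meet: "F \<inter> F' \<noteq> {}"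
  proof (cases "F \<union> F' = {1..n}")
    case True
    thus ?thesis unfolding realization is_sphere_of_dim_def
      using covering_pair_cone_empty[OF _ meet True] by simp
  next
    case False
    have "card ({1..n} - (F \<union> F')) > 0" using F F' False by (auto simp: card_gt_0_iff)
    hence "int (card ({1..n} - (F \<union> F')) - 1) = int n - int (card (F \<union> F')) - 1"
      using card_complement_interval[of "F \<union> F'" n] F(1) F'(1) by simp
    thus ?thesis unfolding realization
      by (intro is_sphere_of_dimI[OF overlapping_pair_cone_sphere[OF _ F(1) F'(1) meet False]]) simp_all
  qed
  show ?thesis using disjoint overlapping edge_spheres_inter_trivial_iff[OF assms(2) F F'] by blast
qed

end
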